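(* Let $c<d$ be real numbers and suppose $\omega$ is nonnegative and nondecreasing on $[c,d)$. Let $\eta>0$ and $r>1$ satisfy $\eta<1-\frac1r$. Let $E\subset[c,d)$ be measurable and set $\rho=\int_E\omega(t)\,dt$. Then for every $t_0\in\mathbb{R}$, $$\rho^{1+r\eta}\,\omega(c)^{r-(1+r\eta)}\le C(\eta,r)\int_E\omega(t)^r\,|t-t_0|^{r\eta}\,dt,$$ and for all $t_1,t_2\in\mathbb{R}$, $$\rho^{1+r\eta}\,|t_2-t_1|^{r\eta}\,\omega(c)^{r-(1+r\eta)}\le C(\eta,r)\int_E\omega(t)^r\,\big(|t-t_1|\cdot|t-t_2|\big)^{r\eta}\,dt,$$ where $C(\eta,r)$ depends only on $\eta$ and $r$. *)

theory Defs
  imports "HOL-Analysis.Analysis"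
begin

text \<open>Real power of an extended nonnegative real, used only with positive exponents:
  infinity to a positive power is infinity.\<close>
definition ennpowr :: "ennreal \<Rightarrow> real \<Rightarrow> ennreal" where
  "ennpowr x p = (if x = \<infinity> then \<infinity> else ennreal (enn2real x powr p))"

end

theory Submission
  imports Defs
begin

text \<open>Since \<omega> is nondecreasing, \<omega> \<ge> a = \<omega> c on E, hence |E| \<le> \<rho> / a.
  For a weight w, the pointwise inequality x \<le> x^r w / K + K^(1/(r-1)) w^(-1/(r-1))
  integrates to \<rho> \<le> I / K + K^(1/(r-1)) \<integral>_E w^(-1/(r-1)), where I = \<integral>_E \<omega>^r w.
  For w = |t - t0|^(r\<eta>) the last integral is O(|E|^(1-q)) with q = r\<eta>/(r-1) < 1, since
  among sets of measure h it is essentially largest for the interval of radius h around t0;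
  for w = (|t - t1| |t - t2|)^(r\<eta>) one of the two factors is at least |t2 - t1| / 2, which
  costs only a factor |t2 - t1|^(-q). Choosing K so that the second term equals \<rho> / 2 and
  absorbing it into the left-hand side yields \<rho>^(1+r\<eta>) a^(r-1-r\<eta>) \<le> C I.\<close>

lemma le_powr_weight_split:
  fixes x w K r :: real
  assumes "0 \<le> x" "w > 0" "K > 0" "r > 1"
  shows "x \<le> x powr r * w / K + K powr (1/(r-1)) * w powr (-1/(r-1))"
proof (cases "K \<le> x powr (r-1) * w")
  case True
  then have "x * K \<le> x * (x powr (r-1) * w)" using assms by (intro mult_left_mono) auto
  also have "\<dots> = x powr r * w" using assms by (cases "x = 0") (simp_all add: powr_diff)
  finally have "x * K \<le> x powr r * w" .
  then have "x \<le> x powr r * w / K" using assms by (simp add: field_simps)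
  then show ?thesis by (simp add: add_increasing2)
next
  case False
  then have "x powr (r-1) < K / w" using assms by (simp add: field_simps)
  then have "(x powr (r-1)) powr (1/(r-1)) \<le> (K / w) powr (1/(r-1))"
    using assms by (intro powr_mono2) auto
  also have "(K / w) powr (1/(r-1)) = K powr (1/(r-1)) * w powr (-1/(r-1))"
    using assms by (simp add: powr_divide powr_minus_divide divide_simps)
  finally have "x \<le> K powr (1/(r-1)) * w powr (-1/(r-1))"
    using assms by (simp add: powr_powr)
  then show ?thesis using assms by (simp add: add_increasing)
qed

lemma nn_integral_abs_diff_powr_interval:
  fixes h q t0 :: real
  assumes "h > 0" "0 < q" "q < 1"
  shows "(\<integral>\<^sup>+t\<in>{t0-h..t0+h}. ennreal (\<bar>t - t0\<bar> powr (-q)) \<partial>lebesgue)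
     = ennreal (2 * h powr (1-q) / (1-q))"
proof -
  have "((\<lambda>x. x powr (-q)) has_integral (h powr (1-q) / (1-q))) {0..h}"
    using has_integral_powr_from_0[of "-q" h] assms by simp
  then have right: "((\<lambda>x. \<bar>x\<bar> powr (-q)) has_integral (h powr (1-q) / (1-q))) {0..h}"
    by (rule has_integral_eq[rotated]) auto
  have left: "((\<lambda>x. \<bar>x\<bar> powr (-q)) has_integral (h powr (1-q) / (1-q))) {-h..0}"
    using has_integral_reflect_lemma_real[OF right] by simp
  have "((\<lambda>x. \<bar>x\<bar> powr (-q)) has_integral (2 * h powr (1-q) / (1-q))) {-h..h}"
    using has_integral_combine[OF _ _ left right] assms by simp
  then have "((\<lambda>x. \<bar>x - t0\<bar> powr (-q)) has_integral (2 * h powr (1-q) / (1-q))) {t0-h..t0+h}"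
    using has_integral_shift_real_ivl[of _ _ "-h" h "-t0"] by (simp add: add.commute)
  then have "(\<integral>\<^sup>+t. ennreal (\<bar>t - t0\<bar> powr (-q)) * indicator {t0-h..t0+h} t \<partial>lborel)
     = ennreal (2 * h powr (1-q) / (1-q))"
    by (rule nn_integral_has_integral_lebesgue'[rotated]) auto
  then show ?thesis by (simp add: nn_integral_completion)
qed

lemma borel_measurable_lebesgue_indicator_mult:
  fixes f :: "real \<Rightarrow> ennreal"
  assumes "f \<in> borel_measurable borel" "E \<in> sets lebesgue"
  shows "(\<lambda>t. f t * indicator E t) \<in> borel_measurable lebesgue"
  using assms by (intro borel_measurable_times_ennreal measurable_completion borel_measurable_indicator) simp_all

lemma nn_integral_abs_diff_powr_le:
  fixes h q t0 :: real
  assumes "h > 0" "0 < q" "q < 1" and E: "E \<in> sets lebesgue" "emeasure lebesgue E \<le> ennreal h"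
  shows "(\<integral>\<^sup>+t\<in>E. ennreal (\<bar>t - t0\<bar> powr (-q)) \<partial>lebesgue) \<le> ennreal ((2/(1-q) + 1) * h powr (1-q))"
proof -
  define I where "I = {t0-h..t0+h}"
  have "(\<integral>\<^sup>+t\<in>E. ennreal (\<bar>t - t0\<bar> powr (-q)) \<partial>lebesgue)
    \<le> (\<integral>\<^sup>+t. ennreal (\<bar>t - t0\<bar> powr (-q)) * indicator I t + ennreal (h powr (-q)) * indicator E t \<partial>lebesgue)"
  proof (rule nn_integral_mono)
    fix t
    have "\<bar>t - t0\<bar> powr (-q) \<le> h powr (-q)" if "t \<notin> I"
      using that assms by (intro powr_mono2') (auto simp: I_def)
    then show "ennreal (\<bar>t - t0\<bar> powr (-q)) * indicator E t
      \<le> ennreal (\<bar>t - t0\<bar> powr (-q)) * indicator I t + ennreal (h powr (-q)) * indicator E t"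
      by (auto simp: indicator_def add_increasing ennreal_leI)
  qed
  also have "\<dots> = (\<integral>\<^sup>+t\<in>I. ennreal (\<bar>t - t0\<bar> powr (-q)) \<partial>lebesgue) + ennreal (h powr (-q)) * emeasure lebesgue E"
    using E unfolding I_def
    by (subst nn_integral_add) (auto intro!: borel_measurable_lebesgue_indicator_mult simp: nn_integral_cmult_indicator)
  also have "\<dots> \<le> ennreal (2 * h powr (1-q) / (1-q)) + ennreal (h powr (-q)) * ennreal h"
    unfolding I_def nn_integral_abs_diff_powr_interval[OF assms(1-3)]
    by (intro add_left_mono mult_left_mono E) auto
  also have "\<dots> = ennreal ((2/(1-q) + 1) * h powr (1-q))"
  proof -
    have "h powr (-q) * h = h powr (1-q)" using assms by (simp add: powr_diff powr_minus field_simps)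
    then show ?thesis
      using assms by (simp add: ennreal_mult'[symmetric] ennreal_plus[symmetric] field_simps del: ennreal_plus)
  qed
  finally show ?thesis .
qed

lemma abs_mult_abs_powr_le:
  fixes q t t1 t2 :: real
  assumes "0 < q" "t1 \<noteq> t2"
  shows "(\<bar>t - t1\<bar> * \<bar>t - t2\<bar>) powr (-q) \<le> (\<bar>t2 - t1\<bar> / 2) powr (-q) * (\<bar>t - t1\<bar> powr (-q) + \<bar>t - t2\<bar> powr (-q))"
proof -
  have key: "(x * y) powr (-q) \<le> (\<bar>t2 - t1\<bar> / 2) powr (-q) * y powr (-q)"
    if "\<bar>t2 - t1\<bar> / 2 \<le> x" "0 \<le> y" for x y :: real
  proof (cases "y = 0")
    case False
    then have "(x * y) powr (-q) \<le> (\<bar>t2 - t1\<bar> / 2 * y) powr (-q)"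
      using that assms by (intro powr_mono2') (auto intro: mult_right_mono)
    also have "\<dots> = (\<bar>t2 - t1\<bar> / 2) powr (-q) * y powr (-q)"
      using that by (intro powr_mult)
    finally show ?thesis .
  qed simp
  have "\<bar>t2 - t1\<bar> / 2 \<le> \<bar>t - t1\<bar> \<or> \<bar>t2 - t1\<bar> / 2 \<le> \<bar>t - t2\<bar>" by (auto simp: abs_if)
  then show ?thesis
    using key[of "\<bar>t - t1\<bar>" "\<bar>t - t2\<bar>"] key[of "\<bar>t - t2\<bar>" "\<bar>t - t1\<bar>"]
    by (auto simp: mult.commute distrib_left add_increasing add_increasing2)
qed

lemma nn_integral_abs_mult_abs_powr_le:
  fixes h q t1 t2 :: real
  assumes "h > 0" "0 < q" "q < 1" "t1 \<noteq> t2"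
    and E: "E \<in> sets lebesgue" "emeasure lebesgue E \<le> ennreal h"
  shows "(\<integral>\<^sup>+t\<in>E. ennreal ((\<bar>t - t1\<bar> * \<bar>t - t2\<bar>) powr (-q)) \<partial>lebesgue)
     \<le> ennreal (2 * (\<bar>t2 - t1\<bar> / 2) powr (-q) * (2/(1-q) + 1) * h powr (1-q))"
proof -
  define c where "c = (\<bar>t2 - t1\<bar> / 2) powr (-q)"
  define f where "f t' t = ennreal (\<bar>t - t'\<bar> powr (-q))" for t' t :: real
  have f_meas: "f t' \<in> borel_measurable lebesgue" for t'
    unfolding f_def by (intro measurable_completion) simp
  have "(\<integral>\<^sup>+t\<in>E. ennreal ((\<bar>t - t1\<bar> * \<bar>t - t2\<bar>) powr (-q)) \<partial>lebesgue)
     \<le> (\<integral>\<^sup>+t. ennreal c * ((f t1 t + f t2 t) * indicator E t) \<partial>lebesgue)"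
  proof (rule nn_integral_mono)
    fix t
    have "ennreal ((\<bar>t - t1\<bar> * \<bar>t - t2\<bar>) powr (-q)) \<le> ennreal c * (f t1 t + f t2 t)"
      using abs_mult_abs_powr_le[OF assms(2,4), of t]
      by (simp add: c_def f_def ennreal_mult'[symmetric] ennreal_plus[symmetric] del: ennreal_plus)
    then show "ennreal ((\<bar>t - t1\<bar> * \<bar>t - t2\<bar>) powr (-q)) * indicator E t
      \<le> ennreal c * ((f t1 t + f t2 t) * indicator E t)"
      by (simp add: indicator_def)
  qed
  also have "\<dots> = ennreal c * ((\<integral>\<^sup>+t\<in>E. f t1 t \<partial>lebesgue) + (\<integral>\<^sup>+t\<in>E. f t2 t \<partial>lebesgue))"
    using f_meas E(1) by (simp add: nn_integral_cmult nn_set_integral_add)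
  also have "\<dots> \<le> ennreal c * (ennreal ((2/(1-q) + 1) * h powr (1-q)) + ennreal ((2/(1-q) + 1) * h powr (1-q)))"
    unfolding f_def by (intro mult_left_mono add_mono nn_integral_abs_diff_powr_le assms) auto
  also have "\<dots> = ennreal (2 * c * (2/(1-q) + 1) * h powr (1-q))"
    using assms by (simp add: c_def ennreal_mult'[symmetric] ennreal_plus[symmetric] del: ennreal_plus)
  finally show ?thesis unfolding c_def .
qed

lemma nn_integral_le_split:
  fixes M :: "'a measure" and g w :: "'a \<Rightarrow> real" and K r :: real
  assumes "r > 1" "K > 0" "E \<in> sets M"
    and g: "g \<in> borel_measurable M" "\<And>t. t \<in> E \<Longrightarrow> 0 \<le> g t"
    and w: "w \<in> borel_measurable M" "AE t in M. 0 < w t"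
  shows "(\<integral>\<^sup>+t\<in>E. ennreal (g t) \<partial>M)
    \<le> ennreal (1/K) * (\<integral>\<^sup>+t\<in>E. ennreal (g t powr r * w t) \<partial>M)
      + ennreal (K powr (1/(r-1))) * (\<integral>\<^sup>+t\<in>E. ennreal (w t powr (-1/(r-1))) \<partial>M)"
proof -
  have "(\<integral>\<^sup>+t\<in>E. ennreal (g t) \<partial>M)
    \<le> (\<integral>\<^sup>+t\<in>E. ennreal (1/K) * ennreal (g t powr r * w t)
        + ennreal (K powr (1/(r-1))) * ennreal (w t powr (-1/(r-1))) \<partial>M)"
  proof (rule nn_integral_mono_AE)
    show "AE t in M. ennreal (g t) * indicator E t
      \<le> (ennreal (1/K) * ennreal (g t powr r * w t)
        + ennreal (K powr (1/(r-1))) * ennreal (w t powr (-1/(r-1)))) * indicator E t"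
      using w(2)
    proof eventually_elim
      case (elim t)
      show ?case
      proof (cases "t \<in> E")
        case True
        have "ennreal (g t) \<le> ennreal (g t powr r * w t / K + K powr (1/(r-1)) * w t powr (-1/(r-1)))"
          using le_powr_weight_split[OF g(2)[OF True] elim assms(2,1)] by (rule ennreal_leI)
        then show ?thesis
          using True elim assms
          by (simp add: ennreal_mult'[symmetric] ennreal_plus[symmetric] del: ennreal_plus)
      qed simp
    qed
  qed
  also have "\<dots> = ennreal (1/K) * (\<integral>\<^sup>+t\<in>E. ennreal (g t powr r * w t) \<partial>M)
      + ennreal (K powr (1/(r-1))) * (\<integral>\<^sup>+t\<in>E. ennreal (w t powr (-1/(r-1))) \<partial>M)"
    using assms(3) g(1) w(1)
    by (simp add: nn_set_integral_add nn_integral_cmult mult.assoc)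
  finally show ?thesis .
qed

lemma powr_lower_bound_of_split:
  fixes R a B r s :: real and I V :: ennreal
  assumes "r > 1" "R > 0" "a > 0" "B > 0"
    and V: "V \<le> ennreal (B * (R / a) powr (1 - s/(r-1)))"
    and split: "\<And>K. K > 0 \<Longrightarrow> ennreal R \<le> ennreal (1/K) * I + ennreal (K powr (1/(r-1))) * V"
  shows "ennreal (R powr (1+s) * a powr (r-(1+s))) \<le> ennreal (2 * (2*B) powr (r-1)) * I"
proof (cases "I = \<infinity>")
  case False
  then obtain J where J: "I = ennreal J" "J \<ge> 0" by (cases I) auto
  \<comment> \<open>the choice making the second term of the split equal to R / 2\<close>
  define K where "K = R powr s * a powr (r - (1+s)) / (2*B) powr (r-1)"
  have K: "K > 0" using assms by (simp add: K_def)
  have "K powr (1/(r-1)) * (B * (R / a) powr (1 - s/(r-1)))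
      = (R powr (s/(r-1)) * R powr (1 - s/(r-1))) * (a powr (1 - s/(r-1)) / a powr (1 - s/(r-1))) / 2"
    using assms unfolding K_def
    by (simp add: powr_divide powr_mult powr_powr field_simps)
  also have "\<dots> = R / 2" using assms by (simp add: powr_add[symmetric])
  finally have half: "K powr (1/(r-1)) * (B * (R / a) powr (1 - s/(r-1))) = R / 2" .
  have "ennreal R \<le> ennreal (1/K) * I + ennreal (K powr (1/(r-1))) * ennreal (B * (R / a) powr (1 - s/(r-1)))"
    using split[OF K] by (rule order.trans) (intro add_left_mono mult_left_mono V; simp)
  also have "\<dots> = ennreal (J / K + R / 2)"
    using J K assms half
    by (simp add: ennreal_mult'[symmetric] ennreal_plus[symmetric] del: ennreal_plus)
  finally have "R \<le> J / K + R / 2"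
    using J K assms by (subst (asm) ennreal_le_iff) auto
  then have "K * R / 2 \<le> J" using K by (simp add: field_simps)
  moreover have "R powr (1+s) * a powr (r-(1+s)) = 2 * (2*B) powr (r-1) * (K * R / 2)"
    using assms by (simp add: K_def powr_add field_simps)
  ultimately have "R powr (1+s) * a powr (r-(1+s)) \<le> 2 * (2*B) powr (r-1) * J"
    using assms by simp
  then show ?thesis using J assms by (simp add: ennreal_mult'[symmetric] ennreal_leI)
qed (use assms in \<open>simp add: ennreal_mult_top\<close>)

lemma nn_integral_weighted_lower_bound:
  fixes M :: "'a measure" and g w :: "'a \<Rightarrow> real" and a B r s :: real
  assumes "r > 1" "B > 0"
    and E: "E \<in> sets M" "emeasure M E < \<infinity>"
    and g: "g \<in> borel_measurable M" "0 \<le> a" "\<And>t. t \<in> E \<Longrightarrow> a \<le> g t"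
    and w: "w \<in> borel_measurable M" "AE t in M. 0 < w t"
    and V: "\<And>h. h > 0 \<Longrightarrow> emeasure M E \<le> ennreal h \<Longrightarrow>
      (\<integral>\<^sup>+t\<in>E. ennreal (w t powr (-1/(r-1))) \<partial>M) \<le> ennreal (B * h powr (1 - s/(r-1)))"
  shows "ennpowr (\<integral>\<^sup>+t\<in>E. ennreal (g t) \<partial>M) (1+s) * ennreal (a powr (r-(1+s)))
    \<le> ennreal (2 * (2*B) powr (r-1)) * (\<integral>\<^sup>+t\<in>E. ennreal (g t powr r * w t) \<partial>M)"
proof -
  define \<rho> where "\<rho> = (\<integral>\<^sup>+t\<in>E. ennreal (g t) \<partial>M)"
  define I where "I = (\<integral>\<^sup>+t\<in>E. ennreal (g t powr r * w t) \<partial>M)"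
  define W where "W = (\<integral>\<^sup>+t\<in>E. ennreal (w t powr (-1/(r-1))) \<partial>M)"
  have split: "\<rho> \<le> ennreal (1/K) * I + ennreal (K powr (1/(r-1))) * W" if "K > 0" for K
    unfolding \<rho>_def I_def W_def
    using g order.trans by (intro nn_integral_le_split assms that) blast+
  have measure_le: "ennreal a * emeasure M E \<le> \<rho>"
  proof -
    have "ennreal a * emeasure M E = (\<integral>\<^sup>+t\<in>E. ennreal a \<partial>M)"
      using E by (simp add: nn_integral_cmult_indicator)
    also have "\<dots> \<le> \<rho>"
      unfolding \<rho>_def using g by (intro nn_integral_mono) (simp add: indicator_def ennreal_leI)
    finally show ?thesis .
  qed
  consider "\<rho> = \<infinity>" | "\<rho> = 0 \<or> a = 0" | R where "\<rho> = ennreal R" "R > 0" "a > 0"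
    using g(2) by (cases \<rho>) (auto simp: less_le)
  then have "ennpowr \<rho> (1+s) * ennreal (a powr (r-(1+s))) \<le> ennreal (2 * (2*B) powr (r-1)) * I"
  proof cases
    case 1
    obtain m where m: "emeasure M E = ennreal m" "m \<ge> 0"
      using E(2) by (cases "emeasure M E") auto
    have "W \<le> ennreal (B * (m+1) powr (1 - s/(r-1)))"
      unfolding W_def using m by (intro V) auto
    then have "W < \<infinity>" by (simp add: order.strict_trans1)
    moreover have "\<infinity> \<le> I + W" using split[of 1] 1 by simp
    ultimately have "I = \<infinity>" by (auto simp: top_unique)
    then show ?thesis using assms(1,2) by (simp add: ennreal_mult_top)
  next
    case 2
    \<comment> \<open>here the left-hand side vanishes, as 0 powr p = 0 for every p\<close>
    then show ?thesis by (auto simp: ennpowr_def)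
  next
    case (3 R)
    have "emeasure M E \<le> ennreal (R / a)"
    proof -
      obtain m where m: "emeasure M E = ennreal m" "m \<ge> 0"
        using E(2) by (cases "emeasure M E") auto
      have "a * m \<le> R"
        using measure_le 3 m by (simp add: ennreal_mult'[symmetric] ennreal_le_iff2)
      then have "m \<le> R / a" using 3 by (simp add: pos_le_divide_eq mult.commute)
      then show ?thesis using m by (simp add: ennreal_leI)
    qed
    then have "W \<le> ennreal (B * (R / a) powr (1 - s/(r-1)))"
      unfolding W_def using 3 by (intro V) auto
    then have "ennreal (R powr (1+s) * a powr (r-(1+s))) \<le> ennreal (2 * (2*B) powr (r-1)) * I"
      using 3 split by (intro powr_lower_bound_of_split assms(1,2)) auto
    moreover have "ennpowr \<rho> (1+s) = ennreal (R powr (1+s))" using 3 by (simp add: ennpowr_def)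
    ultimately show ?thesis by (simp add: ennreal_mult')
  qed
  then show ?thesis unfolding \<rho>_def I_def .
qed

lemma mono_on_weighted_lower_bound:
  fixes \<omega> w :: "real \<Rightarrow> real" and B r s c d :: real
  assumes "r > 1" "B > 0" "c < d"
    and \<omega>: "\<And>t. t \<in> {c..<d} \<Longrightarrow> 0 \<le> \<omega> t" "mono_on {c..<d} \<omega>"
    and E: "E \<in> sets lebesgue" "E \<subseteq> {c..<d}"
    and w: "w \<in> borel_measurable borel" "AE t in lebesgue. 0 < w t"
    and V: "\<And>h. h > 0 \<Longrightarrow> emeasure lebesgue E \<le> ennreal h \<Longrightarrow>
      (\<integral>\<^sup>+t\<in>E. ennreal (w t powr (-1/(r-1))) \<partial>lebesgue) \<le> ennreal (B * h powr (1 - s/(r-1)))"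
  shows "ennpowr (\<integral>\<^sup>+t\<in>E. ennreal (\<omega> t) \<partial>lebesgue) (1+s) * ennreal (\<omega> c powr (r-(1+s)))
    \<le> ennreal (2 * (2*B) powr (r-1)) * (\<integral>\<^sup>+t\<in>E. ennreal (\<omega> t powr r * w t) \<partial>lebesgue)"
proof -
  \<comment> \<open>\<omega> itself need not be measurable outside {c..<d}\<close>
  define g where "g t = indicator {c..<d} t * \<omega> t" for t
  have "g \<in> borel_measurable borel"
    using borel_measurable_mono_on_fnc[OF \<omega>(2)] unfolding g_def
    by (subst (asm) borel_measurable_restrict_space_iff) auto
  then have g_meas: "g \<in> borel_measurable lebesgue"
    by (intro measurable_completion) simp
  have g_eq: "g t = \<omega> t" if "t \<in> E" for t
    using that E(2) by (auto simp: g_def)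
  have "emeasure lebesgue E \<le> emeasure lebesgue {c..<d}"
    using E by (intro emeasure_mono) auto
  then have E_finite: "emeasure lebesgue E < \<infinity>"
    using assms(3) by (simp add: order.strict_trans1)
  have "\<omega> c \<le> g t" if "t \<in> E" for t
    using that E(2) \<omega>(2) assms(3) by (auto simp: g_eq mono_on_def)
  then have "ennpowr (\<integral>\<^sup>+t\<in>E. ennreal (g t) \<partial>lebesgue) (1+s) * ennreal (\<omega> c powr (r-(1+s)))
    \<le> ennreal (2 * (2*B) powr (r-1)) * (\<integral>\<^sup>+t\<in>E. ennreal (g t powr r * w t) \<partial>lebesgue)"
    using \<omega>(1) assms(3) w
    by (intro nn_integral_weighted_lower_bound[OF assms(1,2) E(1) E_finite g_meas] V
        measurable_completion) auto
  moreover have "(\<integral>\<^sup>+t\<in>E. ennreal (g t) \<partial>lebesgue) = (\<integral>\<^sup>+t\<in>E. ennreal (\<omega> t) \<partial>lebesgue)"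
    and "(\<integral>\<^sup>+t\<in>E. ennreal (g t powr r * w t) \<partial>lebesgue)
      = (\<integral>\<^sup>+t\<in>E. ennreal (\<omega> t powr r * w t) \<partial>lebesgue)"
    by (auto intro!: nn_integral_cong simp: indicator_def g_eq)
  ultimately show ?thesis by simp
qed

lemma mono_on_point_weighted_lower_bound:
  fixes \<omega> :: "real \<Rightarrow> real" and B r s c d t0 :: real
  assumes "r > 1" "0 < s" "s < r - 1" "2 / (1 - s/(r-1)) + 1 \<le> B" "c < d"
    and "\<And>t. t \<in> {c..<d} \<Longrightarrow> 0 \<le> \<omega> t" "mono_on {c..<d} \<omega>"
    and E: "E \<in> sets lebesgue" "E \<subseteq> {c..<d}"
  shows "ennpowr (\<integral>\<^sup>+t\<in>E. ennreal (\<omega> t) \<partial>lebesgue) (1+s) * ennreal (\<omega> c powr (r-(1+s)))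
    \<le> ennreal (2 * (2*B) powr (r-1)) * (\<integral>\<^sup>+t\<in>E. ennreal (\<omega> t powr r * \<bar>t - t0\<bar> powr s) \<partial>lebesgue)"
proof (rule mono_on_weighted_lower_bound[OF assms(1) _ assms(5-7) E])
  define q where "q = s/(r-1)"
  have q: "0 < q" "q < 1" using assms(1-3) by (auto simp: q_def field_simps)
  then have "0 < 2 / (1 - q)" by simp
  then show "B > 0" using assms(4) unfolding q_def by linarith
  show "AE t in lebesgue. 0 < \<bar>t - t0\<bar> powr s"
    using AE_completion[OF AE_lborel_singleton[of t0]] by eventually_elim simp
  fix h :: real
  assume "h > 0" "emeasure lebesgue E \<le> ennreal h"
  then have "(\<integral>\<^sup>+t\<in>E. ennreal (\<bar>t - t0\<bar> powr (-q)) \<partial>lebesgue) \<le> ennreal ((2/(1-q) + 1) * h powr (1-q))"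
    using q E by (intro nn_integral_abs_diff_powr_le) auto
  also have "\<dots> \<le> ennreal (B * h powr (1-q))"
    using assms(4) by (intro ennreal_leI mult_right_mono) (auto simp: q_def)
  finally show "(\<integral>\<^sup>+t\<in>E. ennreal ((\<bar>t - t0\<bar> powr s) powr (-1/(r-1))) \<partial>lebesgue)
    \<le> ennreal (B * h powr (1 - s/(r-1)))"
    by (simp add: powr_powr q_def)
qed measurable

lemma mono_on_two_point_weighted_lower_bound:
  fixes \<omega> :: "real \<Rightarrow> real" and B r s c d t1 t2 :: real
  assumes "r > 1" "0 < s" "s < r - 1" "2 powr (1 + s/(r-1)) * (2 / (1 - s/(r-1)) + 1) \<le> B" "c < d"
    and "\<And>t. t \<in> {c..<d} \<Longrightarrow> 0 \<le> \<omega> t" "mono_on {c..<d} \<omega>"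
    and E: "E \<in> sets lebesgue" "E \<subseteq> {c..<d}"
  shows "ennpowr (\<integral>\<^sup>+t\<in>E. ennreal (\<omega> t) \<partial>lebesgue) (1+s) * ennreal (\<bar>t2 - t1\<bar> powr s)
      * ennreal (\<omega> c powr (r-(1+s)))
    \<le> ennreal (2 * (2*B) powr (r-1))
      * (\<integral>\<^sup>+t\<in>E. ennreal (\<omega> t powr r * (\<bar>t - t1\<bar> * \<bar>t - t2\<bar>) powr s) \<partial>lebesgue)"
proof (cases "t1 = t2")
  case False
  define q where "q = s/(r-1)"
  define D where "D = \<bar>t2 - t1\<bar>"
  have q: "0 < q" "q < 1" using assms(1-3) by (auto simp: q_def field_simps)
  have D: "D > 0" using False by (simp add: D_def)
  have "0 < 2 powr (1 + q) * (2 / (1 - q) + 1)" using q by (simp add: add_pos_pos)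
  then have B: "B > 0" using assms(4) unfolding q_def by linarith
  define L where "L = ennpowr (\<integral>\<^sup>+t\<in>E. ennreal (\<omega> t) \<partial>lebesgue) (1+s) * ennreal (\<omega> c powr (r-(1+s)))"
  define I where "I = (\<integral>\<^sup>+t\<in>E. ennreal (\<omega> t powr r * (\<bar>t - t1\<bar> * \<bar>t - t2\<bar>) powr s) \<partial>lebesgue)"
  have "L \<le> ennreal (2 * (2 * (B * D powr (-q))) powr (r-1)) * I"
    unfolding L_def I_def
  proof (rule mono_on_weighted_lower_bound[OF assms(1) _ assms(5-7) E])
    show "B * D powr (-q) > 0" using B D by simp
    show "AE t in lebesgue. 0 < (\<bar>t - t1\<bar> * \<bar>t - t2\<bar>) powr s"
      using AE_completion[OF AE_lborel_singleton[of t1]] AE_completion[OF AE_lborel_singleton[of t2]]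
      by eventually_elim simp
    fix h :: real
    assume h: "h > 0" "emeasure lebesgue E \<le> ennreal h"
    have "(D / 2) powr (-q) = 2 powr q * D powr (-q)"
      using D by (simp add: powr_divide powr_minus field_simps)
    moreover have "2 powr (1 + q) = 2 * 2 powr q" by (simp add: powr_add)
    ultimately have "2 * (D / 2) powr (-q) * (2/(1-q) + 1) * h powr (1-q)
        = 2 powr (1 + q) * (2/(1-q) + 1) * D powr (-q) * h powr (1-q)"
      by (simp add: ac_simps)
    also have "\<dots> \<le> B * D powr (-q) * h powr (1-q)"
      using assms(4) by (intro mult_right_mono) (auto simp: q_def)
    finally have const: "2 * (D / 2) powr (-q) * (2/(1-q) + 1) * h powr (1-q) \<le> B * D powr (-q) * h powr (1-q)" .
    have "(\<integral>\<^sup>+t\<in>E. ennreal ((\<bar>t - t1\<bar> * \<bar>t - t2\<bar>) powr (-q)) \<partial>lebesgue)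
        \<le> ennreal (2 * (D / 2) powr (-q) * (2/(1-q) + 1) * h powr (1-q))"
      using q E False h unfolding D_def by (intro nn_integral_abs_mult_abs_powr_le) auto
    also have "\<dots> \<le> ennreal (B * D powr (-q) * h powr (1-q))"
      using const by (rule ennreal_leI)
    finally show "(\<integral>\<^sup>+t\<in>E. ennreal (((\<bar>t - t1\<bar> * \<bar>t - t2\<bar>) powr s) powr (-1/(r-1))) \<partial>lebesgue)
      \<le> ennreal (B * D powr (-q) * h powr (1 - s/(r-1)))"
      by (simp add: powr_powr q_def)
  qed measurable
  then have "L * ennreal (D powr s) \<le> ennreal (2 * (2 * (B * D powr (-q))) powr (r-1)) * I * ennreal (D powr s)"
    by (rule mult_right_mono) simp
  also have "\<dots> = ennreal (2 * (2 * (B * D powr (-q))) powr (r-1) * D powr s) * I"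
    by (simp add: ennreal_mult' ac_simps)
  also have "2 * (2 * (B * D powr (-q))) powr (r-1) * D powr s = 2 * (2*B) powr (r-1)"
  proof -
    have "(2 * (B * D powr (-q))) powr (r-1) = (2*B) powr (r-1) * D powr (-s)"
      using B D assms(1) by (simp add: powr_mult powr_powr q_def)
    then show ?thesis using D by (simp add: powr_minus)
  qed
  finally show ?thesis by (simp add: L_def I_def D_def ac_simps)
qed simp

theorem lemma2p3:
  fixes \<eta> r :: real
  assumes "\<eta> > 0" and "r > 1" and "\<eta> < 1 - 1 / r"
  shows "\<exists>C>0. \<forall>(c::real) (d::real) (\<omega>::real \<Rightarrow> real) (E::real set).
    c < d \<and> (\<forall>t\<in>{c..<d}. 0 \<le> \<omega> t) \<and> mono_on {c..<d} \<omega> \<and>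
    E \<in> sets lebesgue \<and> E \<subseteq> {c..<d} \<longrightarrow>
      (let \<rho> = (\<integral>\<^sup>+ t\<in>E. ennreal (\<omega> t) \<partial>lebesgue) in
        (\<forall>t0::real.
          ennpowr \<rho> (1 + r * \<eta>) * ennreal (\<omega> c powr (r - (1 + r * \<eta>)))
            \<le> ennreal C * (\<integral>\<^sup>+ t\<in>E. ennreal (\<omega> t powr r * \<bar>t - t0\<bar> powr (r * \<eta>)) \<partial>lebesgue)) \<and>
        (\<forall>t1 t2::real.
          ennpowr \<rho> (1 + r * \<eta>) * ennreal (\<bar>t2 - t1\<bar> powr (r * \<eta>))
              * ennreal (\<omega> c powr (r - (1 + r * \<eta>)))
            \<le> ennreal C * (\<integral>\<^sup>+ t\<in>E. ennreal (\<omega> t powr r * (\<bar>t - t1\<bar> * \<bar>t - t2\<bar>) powr (r * \<eta>)) \<partial>lebesgue)))"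
proof -
  define s where "s = r * \<eta>"
  have s: "0 < s" "s < r - 1"
    using assms by (auto simp: s_def field_simps)
  define q where "q = s / (r - 1)"
  have q: "0 < q" "q < 1"
    using s by (auto simp: q_def field_simps)
  define B where "B = 2 powr (1 + q) * (2 / (1 - q) + 1)"
  have "1 \<le> (2::real) powr (1 + q)"
    using q by (intro ge_one_powr_ge_zero) auto
  moreover have "0 < 2 / (1 - q) + 1"
    using q by (simp add: add_pos_pos)
  ultimately have B: "2 / (1 - q) + 1 \<le> B" "0 < B"
    unfolding B_def by (simp_all add: mult_le_cancel_right1)
  show ?thesis
    unfolding s_def[symmetric] Let_def
    using mono_on_point_weighted_lower_bound[OF assms(2) s, of B]
      mono_on_two_point_weighted_lower_bound[OF assms(2) s, of B] B
    by (intro exI[of _ "2 * (2*B) powr (r-1)"]) (auto simp: B_def q_def)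
qed

end
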